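(* Let $\mathbb{F}$ be a field, $\mathcal{S}\subseteq 2^{[n]}$ a Sperner family and $h:\mathcal{S}\to 2^{[n]}$ a function with $h(S)\subseteq S$ for every $S\in\mathcal{S}$. Then $\mathbb{G}=\mathbb{G}(\mathcal{S},h)$ is a Gröbner basis of the ideal $\langle\mathbb{G}\rangle\subseteq\mathbb{F}[x_1,\dots,x_n]$ with respect to some term order if and only if $|\mathcal{H}(\mathcal{S})|=|\mathcal{F}(\mathcal{S},h)|$.
   Context: $[n]=\{1,\dots,n\}$. A Sperner family is a family of sets none of which is contained in another. For $H\subseteq S\subseteq[n]$, $\mathcal{Q}_{S,H}=\{H\cup B: B\subseteq[n]\setminus S\}$; $\mathcal{H}(\mathcal{S})=\{F\subseteq[n]: \text{no } S\in\mathcal{S} \text{ satisfies } S\subseteq F\}$; $\mathcal{F}(\mathcal{S},h)=2^{[n]}\setminus\bigcup_{S\in\mathcal{S}}\mathcal{Q}_{S,h(S)}$. For $H\subseteq[n]$ put $\mathbf{x}_H=\prod_{i\in H}x_i$, and for $H\subseteq S\subseteq[n]$ put $f_{S,H}(\mathbf{x})=\mathbf{x}_H\prod_{i\in S\setminus H}(x_i-1)$. Define $\mathbb{G}(\mathcal{S},h)=\{f_{S,h(S)}: S\in\mathcal{S}\}\cup\{x_i^2-x_i: i\in[n]\}$. A term order is a total order on monomials of $\mathbb{F}[x_1,\dots,x_n]$ with $1$ minimal and compatible with multiplication by monomials; $\mathrm{lm}(f)$ is the largest monomial of $f\neq0$ with nonzero coefficient. A finite $\mathbb{G}\subseteq I$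 is a Gröbner basis of an ideal $I$ with respect to a term order if for every nonzero $f\in I$ some $g\in\mathbb{G}$ has $\mathrm{lm}(g)$ dividing $\mathrm{lm}(f)$. *)

theory Defs
  imports Main "HOL-Library.Poly_Mapping"
begin

text \<open>Multivariate polynomials over a field 'a: finitely supported maps from monomials
(finitely supported exponent vectors) to coefficients, with convolution product.
Variables are x_i, i \<in> {1..n}.\<close>

type_synonym mon = "nat \<Rightarrow>\<^sub>0 nat"
type_synonym 'a mpoly = "mon \<Rightarrow>\<^sub>0 'a"

definition monomials :: "nat \<Rightarrow> mon set" where
  "monomials n = {m. Poly_Mapping.keys m \<subseteq> {1..n}}"

definition polyring :: "nat \<Rightarrow> ('a::field) mpoly set" where
  "polyring n = {p. Poly_Mapping.keys p \<subseteq> monomials n}"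

definition X :: "nat \<Rightarrow> ('a::field) mpoly" where
  "X i = Poly_Mapping.single (Poly_Mapping.single i 1) 1"

definition gen_ideal :: "nat \<Rightarrow> ('a::field) mpoly set \<Rightarrow> 'a mpoly set" where
  "gen_ideal n G = {(\<Sum>g\<in>G. q g * g) | q. \<forall>g\<in>G. q g \<in> polyring n}"

definition term_order :: "nat \<Rightarrow> (mon \<Rightarrow> mon \<Rightarrow> bool) \<Rightarrow> bool" where
  "term_order n le \<longleftrightarrow>
     (\<forall>a\<in>monomials n. le a a) \<and>
     (\<forall>a\<in>monomials n. \<forall>b\<in>monomials n. le a b \<and> le b a \<longrightarrow> a = b) \<and>
     (\<forall>a\<in>monomials n. \<forall>b\<in>monomials n. \<forall>c\<in>monomials n. le a b \<and> le b c \<longrightarrow> le a c) \<and>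
     (\<forall>a\<in>monomials n. \<forall>b\<in>monomials n. le a b \<or> le b a) \<and>
     (\<forall>a\<in>monomials n. le 0 a) \<and>
     (\<forall>a\<in>monomials n. \<forall>b\<in>monomials n. \<forall>c\<in>monomials n. le a b \<longrightarrow> le (a + c) (b + c))"

definition lm :: "(mon \<Rightarrow> mon \<Rightarrow> bool) \<Rightarrow> ('a::zero) mpoly \<Rightarrow> mon" where
  "lm le f = (THE m. m \<in> Poly_Mapping.keys f \<and> (\<forall>m'\<in>Poly_Mapping.keys f. le m' m))"

definition mon_dvd :: "mon \<Rightarrow> mon \<Rightarrow> bool" where
  "mon_dvd a b \<longleftrightarrow> (\<forall>i. Poly_Mapping.lookup a i \<le> Poly_Mapping.lookup b i)"

definition groebner_basis :: "(mon \<Rightarrow> mon \<Rightarrow> bool) \<Rightarrow> ('a::field) mpoly set \<Rightarrow> 'a mpoly set \<Rightarrow> bool" where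
  "groebner_basis le G I \<longleftrightarrow> finite G \<and> G \<subseteq> I \<and>
     (\<forall>f\<in>I. f \<noteq> 0 \<longrightarrow> (\<exists>g\<in>G. g \<noteq> 0 \<and> mon_dvd (lm le g) (lm le f)))"

definition sperner :: "nat set set \<Rightarrow> bool" where
  "sperner S \<longleftrightarrow> (\<forall>A\<in>S. \<forall>B\<in>S. A \<subseteq> B \<longrightarrow> A = B)"

definition Q :: "nat \<Rightarrow> nat set \<Rightarrow> nat set \<Rightarrow> nat set set" where
  "Q n S H = {H \<union> B | B. B \<subseteq> {1..n} - S}"

definition HH :: "nat \<Rightarrow> nat set set \<Rightarrow> nat set set" where
  "HH n S = {F. F \<subseteq> {1..n} \<and> \<not> (\<exists>A\<in>S. A \<subseteq> F)}"

definition FF :: "nat \<Rightarrow> nat set set \<Rightarrow> (nat set \<Rightarrow> nat set) \<Rightarrow> nat set set" where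
  "FF n S h = Pow {1..n} - (\<Union>A\<in>S. Q n A (h A))"

definition xH :: "nat set \<Rightarrow> ('a::field) mpoly" where
  "xH H = (\<Prod>i\<in>H. X i)"

definition fSH :: "nat set \<Rightarrow> nat set \<Rightarrow> ('a::field) mpoly" where
  "fSH S H = xH H * (\<Prod>i\<in>S - H. X i - 1)"

definition GG :: "nat \<Rightarrow> nat set set \<Rightarrow> (nat set \<Rightarrow> nat set) \<Rightarrow> ('a::field) mpoly set" where
  "GG n S h = {fSH A (h A) | A. A \<in> S} \<union> {X i ^ 2 - X i | i. i \<in> {1..n}}"

end

theory Submission
  imports Defs "HOL-Library.Function_Algebras" "HOL.Vector_Spaces"
begin

(* Identify w \<subseteq> [n] with its characteristic vector.  Every generator in G vanishes at the points
   of F(S,h), hence so does the whole ideal, while for every other point v of the cube a multiple of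
   some f_{S,h(S)} is the interpolation polynomial of v.  Consequently a polynomial supported on
   squarefree monomials lies in the ideal iff it vanishes on F(S,h).  For every term order the
   monomials divisible by no leading monomial of G are exactly the x_T with T \<in> H(S), and the
   restrictions of these x_T to F(S,h) always span all functions on F(S,h).  So G is a Groebner basis
   iff no nonzero combination of the x_T, T \<in> H(S), vanishes on F(S,h), i.e. iff these |H(S)|
   functions are linearly independent in the |F(S,h)|-dimensional space they span, i.e. iff
   |H(S)| = |F(S,h)|. *)

definition mon_of_set :: "nat set \<Rightarrow> mon" where
  "mon_of_set T = (\<Sum>i\<in>T. Poly_Mapping.single i 1)"

lemma lookup_mon_of_set:
  "finite T \<Longrightarrow> Poly_Mapping.lookup (mon_of_set T) i = (if i \<in> T then 1 else 0)"
  by (simp add: mon_of_set_def lookup_sum lookup_single when_def)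

lemma keys_mon_of_set: "finite T \<Longrightarrow> Poly_Mapping.keys (mon_of_set T) = T"
  by (auto simp: in_keys_iff lookup_mon_of_set split: if_splits)

lemma mon_of_set_eq_iff: "finite T \<Longrightarrow> finite U \<Longrightarrow> mon_of_set T = mon_of_set U \<longleftrightarrow> T = U"
  by (metis keys_mon_of_set)

lemma mon_of_set_union:
  "finite A \<Longrightarrow> finite B \<Longrightarrow> A \<inter> B = {} \<Longrightarrow> mon_of_set (A \<union> B) = mon_of_set A + mon_of_set B"
  by (simp add: mon_of_set_def sum.union_disjoint)

lemma mon_of_set_in_monomials: "T \<subseteq> {1..n} \<Longrightarrow> mon_of_set T \<in> monomials n"
  using finite_subset[of T "{1..n}"] by (simp add: monomials_def keys_mon_of_set)

lemma mon_dvd_mon_of_set_iff: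
  "finite A \<Longrightarrow> finite T \<Longrightarrow> mon_dvd (mon_of_set A) (mon_of_set T) \<longleftrightarrow> A \<subseteq> T"
  unfolding mon_dvd_def by (auto simp: lookup_mon_of_set split: if_splits)

lemma mon_dvd_mon_of_set_keys: "finite A \<Longrightarrow> A \<subseteq> Poly_Mapping.keys m \<Longrightarrow> mon_dvd (mon_of_set A) m"
  unfolding mon_dvd_def by (auto simp: lookup_mon_of_set in_keys_iff)

lemma mon_of_set_keys_if_lookup_le_1:
  assumes "\<And>i. Poly_Mapping.lookup m i \<le> 1"
  shows "m = mon_of_set (Poly_Mapping.keys m)"
proof (rule poly_mapping_eqI)
  fix i
  show "Poly_Mapping.lookup m i = Poly_Mapping.lookup (mon_of_set (Poly_Mapping.keys m)) i"
    using assms[of i] by (auto simp: lookup_mon_of_set in_keys_iff)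
qed

lemma xH_eq_single: "finite T \<Longrightarrow> (xH T :: 'a::field mpoly) = Poly_Mapping.single (mon_of_set T) 1"
proof (induction T rule: finite_induct)
  case empty
  then show ?case by (simp add: xH_def mon_of_set_def)
next
  case (insert i T)
  then have "(xH (insert i T) :: 'a mpoly) = X i * xH T" by (simp add: xH_def)
  also have "\<dots> = Poly_Mapping.single (Poly_Mapping.single i 1 + mon_of_set T) 1"
    using insert by (simp add: X_def mult_single)
  finally show ?case using insert by (simp add: mon_of_set_def)
qed

lemma xH_union:
  "finite A \<Longrightarrow> finite B \<Longrightarrow> A \<inter> B = {} \<Longrightarrow> (xH (A \<union> B) :: 'a::field mpoly) = xH A * xH B"
  by (simp add: xH_def prod.union_disjoint)

lemma neg_one_power_eq_single: "((-1) ^ k :: 'a::field mpoly) = Poly_Mapping.single 0 ((-1) ^ k)"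
  by (induction k) (auto simp: mult_single single_uminus)

lemma fSH_expansion:
  assumes "finite S" "H \<subseteq> S"
  shows "(fSH S H :: 'a::field mpoly) =
    (\<Sum>B\<in>Pow (S - H). Poly_Mapping.single (mon_of_set (H \<union> B)) ((-1) ^ card (S - H - B)))"
proof -
  have fH: "finite H" using assms finite_subset by blast
  have "(\<Prod>i\<in>S - H. X i - 1 :: 'a mpoly) = (\<Prod>i\<in>S - H. X i + (-1))" by simp
  also have "\<dots> = (\<Sum>B\<in>Pow (S - H). (\<Prod>i\<in>B. X i) * (\<Prod>i\<in>S - H - B. -1))"
    using assms by (intro prod_add) auto
  also have "\<dots> = (\<Sum>B\<in>Pow (S - H). xH B * (-1) ^ card (S - H - B))"
    by (simp only: xH_def prod_constant)
  finally have "(fSH S H :: 'a mpoly) = (\<Sum>B\<in>Pow (S - H). xH H * (xH B * (-1) ^ card (S - H - B)))"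
    by (simp add: fSH_def sum_distrib_left)
  also have "\<dots> = (\<Sum>B\<in>Pow (S - H). Poly_Mapping.single (mon_of_set (H \<union> B)) ((-1) ^ card (S - H - B)))"
  proof (rule sum.cong)
    fix B assume B: "B \<in> Pow (S - H)"
    then have "finite B" "H \<inter> B = {}" using assms finite_subset by (metis PowD finite_Diff) (use B in blast)
    with fH show "xH H * (xH B * (-1) ^ card (S - H - B)) =
        Poly_Mapping.single (mon_of_set (H \<union> B)) ((-1) ^ card (S - H - B) :: 'a)"
      by (simp add: xH_union[symmetric] mult.assoc[symmetric] xH_eq_single neg_one_power_eq_single mult_single mon_of_set_union)
  qed simp
  finally show ?thesis .
qed

lemma keys_fSH_subset:
  assumes "finite S" "H \<subseteq> S"
  shows "Poly_Mapping.keys (fSH S H :: 'a::field mpoly) \<subseteq> mon_of_set ` Pow S"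
proof -
  have "Poly_Mapping.keys (fSH S H :: 'a mpoly) \<subseteq>
      (\<Union>B\<in>Pow (S - H). Poly_Mapping.keys (Poly_Mapping.single (mon_of_set (H \<union> B)) ((-1) ^ card (S - H - B) :: 'a)))"
    unfolding fSH_expansion[OF assms] by (rule keys_sum)
  also have "\<dots> \<subseteq> mon_of_set ` Pow S" using assms by auto
  finally show ?thesis .
qed

lemma lookup_fSH_top:
  assumes "finite S" "H \<subseteq> S"
  shows "Poly_Mapping.lookup (fSH S H :: 'a::field mpoly) (mon_of_set S) = 1"
proof -
  have "Poly_Mapping.lookup (fSH S H :: 'a mpoly) (mon_of_set S) = (\<Sum>B\<in>Pow (S - H). if B = S - H then 1 else 0)"
    unfolding fSH_expansion[OF assms] lookup_sum
  proof (rule sum.cong)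
    fix B assume B: "B \<in> Pow (S - H)"
    then have "finite B" "finite H" using assms finite_subset by (metis PowD finite_Diff) (use assms finite_subset in blast)
    then have "mon_of_set (H \<union> B) = mon_of_set S \<longleftrightarrow> B = S - H"
      using B assms by (subst mon_of_set_eq_iff) auto
    then show "Poly_Mapping.lookup (Poly_Mapping.single (mon_of_set (H \<union> B)) ((-1) ^ card (S - H - B))) (mon_of_set S) =
        (if B = S - H then 1 else (0::'a))"
      by (auto simp: lookup_single when_def)
  qed simp
  also have "\<dots> = 1" using assms by (simp add: sum.delta')
  finally show ?thesis .
qed

lemma X_square: "(X i ^ 2 :: 'a::field mpoly) = Poly_Mapping.single (Poly_Mapping.single i 2) 1"
proof -
  have "(X i ^ 2 :: 'a mpoly) = Poly_Mapping.single (Poly_Mapping.single i 1 + Poly_Mapping.single i 1) 1"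
    by (simp add: power2_eq_square X_def mult_single)
  also have "Poly_Mapping.single i 1 + Poly_Mapping.single i 1 = Poly_Mapping.single i (2::nat)"
    by (metis one_add_one single_add)
  finally show ?thesis .
qed

lemma GG_cases:
  assumes "g \<in> GG n S h"
  obtains A where "A \<in> S" "g = fSH A (h A)" | i where "i \<in> {1..n}" "g = X i ^ 2 - X i"
  using assms unfolding GG_def by blast

lemma finite_GG: "finite S \<Longrightarrow> finite (GG n S h :: 'a::field mpoly set)"
proof -
  assume "finite S"
  have "(GG n S h :: 'a mpoly set) = (\<lambda>A. fSH A (h A)) ` S \<union> (\<lambda>i. X i ^ 2 - X i) ` {1..n}"
    unfolding GG_def by blast
  with \<open>finite S\<close> show ?thesis by simp
qed

lemma finite_FF: "finite (FF n S h)"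
  unfolding FF_def by auto

lemma finite_HH: "finite (HH n S)"
  by (rule finite_subset[of _ "Pow {1..n}"]) (auto simp: HH_def)

lemma finite_HH_member: "T \<in> HH n S \<Longrightarrow> finite T"
  using finite_subset[of T "{1..n}"] by (simp add: HH_def)

lemma Q_iff:
  assumes "A \<subseteq> {1..n}" "H \<subseteq> A" "w \<subseteq> {1..n}"
  shows "w \<in> Q n A H \<longleftrightarrow> H \<subseteq> w \<and> (A - H) \<inter> w = {}"
proof
  assume "w \<in> Q n A H"
  then show "H \<subseteq> w \<and> (A - H) \<inter> w = {}" unfolding Q_def by blast
next
  assume "H \<subseteq> w \<and> (A - H) \<inter> w = {}"
  then have "w = H \<union> (w - A)" "w - A \<subseteq> {1..n} - A" using assms by auto
  then show "w \<in> Q n A H" unfolding Q_def by blast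
qed

lemma FF_iff: "w \<in> FF n S h \<longleftrightarrow> w \<subseteq> {1..n} \<and> (\<forall>A\<in>S. w \<notin> Q n A (h A))"
  unfolding FF_def by auto

section \<open>Term orders and leading monomials\<close>

context
  fixes n :: nat and le :: "mon \<Rightarrow> mon \<Rightarrow> bool"
  assumes to: "term_order n le"
begin

lemma term_order_refl: "a \<in> monomials n \<Longrightarrow> le a a"
  using to unfolding term_order_def by blast

lemma term_order_antisym: "a \<in> monomials n \<Longrightarrow> b \<in> monomials n \<Longrightarrow> le a b \<Longrightarrow> le b a \<Longrightarrow> a = b"
  using to unfolding term_order_def by blast

lemma term_order_trans:
  "a \<in> monomials n \<Longrightarrow> b \<in> monomials n \<Longrightarrow> c \<in> monomials n \<Longrightarrow> le a b \<Longrightarrow> le b c \<Longrightarrow> le a c"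
  using to unfolding term_order_def by blast

lemma term_order_total: "a \<in> monomials n \<Longrightarrow> b \<in> monomials n \<Longrightarrow> le a b \<or> le b a"
  using to unfolding term_order_def by blast

lemma term_order_mon_dvd_imp_le:
  assumes a: "a \<in> monomials n" and b: "b \<in> monomials n" and dvd: "mon_dvd a b"
  shows "le a b"
proof -
  have lookup_diff: "Poly_Mapping.lookup (b - a) i = Poly_Mapping.lookup b i - Poly_Mapping.lookup a i" for i
    by transfer simp
  have c: "b - a \<in> monomials n" using b unfolding monomials_def by (auto simp: in_keys_iff lookup_diff)
  have "b = (b - a) + a"
    using dvd unfolding mon_dvd_def by (intro poly_mapping_eqI) (simp add: lookup_add lookup_diff)
  moreover have "le (0 + a) ((b - a) + a)"
    using to c a unfolding term_order_def by (metis monomials_def keys_zero empty_subsetI mem_Collect_eq)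
  ultimately show ?thesis by simp
qed

lemma term_order_max_exists:
  assumes "finite A" "A \<noteq> {}" "A \<subseteq> monomials n"
  shows "\<exists>m\<in>A. \<forall>m'\<in>A. le m' m"
  using assms
proof (induction A rule: finite_ne_induct)
  case (singleton x)
  then show ?case using term_order_refl by auto
next
  case (insert x F)
  then obtain m where m: "m \<in> F" "\<forall>m'\<in>F. le m' m" by auto
  have xm: "x \<in> monomials n" "m \<in> monomials n" using insert m by auto
  show ?case
  proof (cases "le x m")
    case False
    then have "le m x" using term_order_total[OF xm] by blast
    then have "\<forall>m'\<in>F. le m' x" using m term_order_trans xm insert.prems by blast
    then show ?thesis using term_order_refl[OF xm(1)] by auto
  qed (use m in auto)
qed

lemma lm_eqI:
  assumes "Poly_Mapping.keys f \<subseteq> monomials n"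
    and "m \<in> Poly_Mapping.keys f" and "\<forall>m'\<in>Poly_Mapping.keys f. le m' m"
  shows "lm le f = m"
  unfolding lm_def using assms term_order_antisym by (intro the_equality) blast+

lemma lm_in_keys_and_max:
  assumes "Poly_Mapping.keys f \<subseteq> monomials n" and "f \<noteq> 0"
  shows "lm le f \<in> Poly_Mapping.keys f" "\<forall>m'\<in>Poly_Mapping.keys f. le m' (lm le f)"
proof -
  obtain m where "m \<in> Poly_Mapping.keys f" "\<forall>m'\<in>Poly_Mapping.keys f. le m' m"
    using term_order_max_exists[OF finite_keys _ assms(1)] assms(2) by auto
  with lm_eqI[OF assms(1)] show "lm le f \<in> Poly_Mapping.keys f" "\<forall>m'\<in>Poly_Mapping.keys f. le m' (lm le f)"
    by auto
qed

lemma lm_dvd_key_imp_eq: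
  assumes "Poly_Mapping.keys f \<subseteq> monomials n" and "f \<noteq> 0"
    and "m \<in> Poly_Mapping.keys f" and "mon_dvd (lm le f) m"
  shows "m = lm le f"
proof -
  note lm = lm_in_keys_and_max[OF assms(1,2)]
  have "le (lm le f) m" using assms lm(1) by (intro term_order_mon_dvd_imp_le) auto
  moreover have "le m (lm le f)" using lm(2) assms(3) by blast
  ultimately show ?thesis using assms(1,3) lm(1) term_order_antisym by blast
qed

lemma lm_X_square_minus_X:
  assumes i: "i \<in> {1..n}"
  shows "(X i ^ 2 - X i :: 'a::field mpoly) \<noteq> 0" "lm le (X i ^ 2 - X i :: 'a mpoly) = Poly_Mapping.single i 2"
proof -
  let ?p = "X i ^ 2 - X i :: 'a mpoly"
  have "Poly_Mapping.single i (2::nat) \<noteq> Poly_Mapping.single i 1"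
    by (metis inj_single injD numeral_One numeral_eq_iff semiring_norm(85))
  moreover have lookup_p: "Poly_Mapping.lookup ?p m =
      (if m = Poly_Mapping.single i 2 then 1 else 0) - (if m = Poly_Mapping.single i 1 then 1 else 0)" for m
    unfolding X_square by (simp add: X_def lookup_minus lookup_single when_def)
  ultimately have top: "Poly_Mapping.single i 2 \<in> Poly_Mapping.keys ?p" by (simp add: in_keys_iff)
  then show "?p \<noteq> 0" by auto
  have keys_p: "Poly_Mapping.keys ?p \<subseteq> {Poly_Mapping.single i 2, Poly_Mapping.single i 1}"
    by (auto simp: in_keys_iff lookup_p split: if_splits)
  have mons: "Poly_Mapping.single i 2 \<in> monomials n" "Poly_Mapping.single i 1 \<in> monomials n"
    using i by (auto simp: monomials_def)
  have "le (Poly_Mapping.single i 1) (Poly_Mapping.single i 2)"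
    using mons by (intro term_order_mon_dvd_imp_le) (simp_all add: mon_dvd_def lookup_single when_def)
  then show "lm le ?p = Poly_Mapping.single i 2"
    using keys_p mons top term_order_refl by (intro lm_eqI) auto
qed

lemma lm_fSH:
  assumes A: "A \<subseteq> {1..n}" and H: "H \<subseteq> A"
  shows "(fSH A H :: 'a::field mpoly) \<noteq> 0" "lm le (fSH A H :: 'a mpoly) = mon_of_set A"
proof -
  let ?p = "fSH A H :: 'a mpoly"
  have fA: "finite A" using A finite_subset by blast
  have top: "mon_of_set A \<in> Poly_Mapping.keys ?p" by (simp add: in_keys_iff lookup_fSH_top[OF fA H])
  then show "?p \<noteq> 0" by auto
  have keys_p: "Poly_Mapping.keys ?p \<subseteq> mon_of_set ` Pow A" by (rule keys_fSH_subset[OF fA H])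
  have mon: "mon_of_set U \<in> monomials n" if "U \<subseteq> A" for U
    using that A by (intro mon_of_set_in_monomials) blast
  have le_top: "le (mon_of_set U) (mon_of_set A)" if "U \<subseteq> A" for U
  proof (rule term_order_mon_dvd_imp_le)
    show "mon_dvd (mon_of_set U) (mon_of_set A)"
      using that fA finite_subset[OF that fA] by (simp add: mon_dvd_mon_of_set_iff)
  qed (use that mon in auto)
  have "Poly_Mapping.keys ?p \<subseteq> monomials n" using keys_p mon by blast
  moreover have "\<forall>m\<in>Poly_Mapping.keys ?p. le m (mon_of_set A)" using keys_p le_top by blast
  ultimately show "lm le ?p = mon_of_set A" using top lm_eqI by blast
qed

end

lemma GG_lm_not_dvd_standard:
  assumes to: "term_order n le" and S: "S \<subseteq> Pow {1..n}" and hS: "\<forall>A\<in>S. h A \<subseteq> A"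
    and g: "g \<in> (GG n S h :: 'a::field mpoly set)" and T: "T \<in> HH n S"
  shows "\<not> mon_dvd (lm le g) (mon_of_set T)"
proof
  assume dvd: "mon_dvd (lm le g) (mon_of_set T)"
  have T_fin: "finite T" using T by (rule finite_HH_member)
  from g show False
  proof (cases rule: GG_cases)
    case (1 A)
    then have A: "A \<subseteq> {1..n}" "h A \<subseteq> A" using S hS by auto
    then have "mon_dvd (mon_of_set A) (mon_of_set T)"
      using dvd 1(2) lm_fSH[OF to] by metis
    moreover have "finite A" using A(1) finite_subset by blast
    ultimately have "A \<subseteq> T" using T_fin by (simp add: mon_dvd_mon_of_set_iff)
    then show False using T 1 by (auto simp: HH_def)
  next
    case (2 i)
    then have "Poly_Mapping.lookup (Poly_Mapping.single i 2) i \<le> Poly_Mapping.lookup (mon_of_set T) i"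
      using dvd lm_X_square_minus_X[OF to] unfolding mon_dvd_def by metis
    then show False using T_fin by (simp add: lookup_mon_of_set split: if_splits)
  qed
qed

lemma GG_lm_dvd_nonstandard:
  assumes to: "term_order n le" and S: "S \<subseteq> Pow {1..n}" and hS: "\<forall>A\<in>S. h A \<subseteq> A"
    and m: "m \<in> monomials n" "m \<notin> mon_of_set ` HH n S"
  shows "\<exists>g\<in>(GG n S h :: 'a::field mpoly set). g \<noteq> 0 \<and> mon_dvd (lm le g) m"
proof (cases "\<exists>i. 2 \<le> Poly_Mapping.lookup m i")
  case True
  then obtain i where i: "2 \<le> Poly_Mapping.lookup m i" by blast
  then have "i \<in> Poly_Mapping.keys m" by (simp add: in_keys_iff)
  then have "i \<in> {1..n}" using m(1) by (auto simp: monomials_def)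
  moreover have "mon_dvd (Poly_Mapping.single i 2) m"
    using i by (simp add: mon_dvd_def lookup_single when_def)
  moreover have "X i ^ 2 - X i \<in> (GG n S h :: 'a mpoly set)" using \<open>i \<in> {1..n}\<close> unfolding GG_def by blast
  ultimately show ?thesis using lm_X_square_minus_X[OF to] by metis
next
  case False
  then have "m = mon_of_set (Poly_Mapping.keys m)"
    by (intro mon_of_set_keys_if_lookup_le_1) (simp add: not_le numeral_2_eq_2 less_Suc_eq_le)
  moreover have "Poly_Mapping.keys m \<subseteq> {1..n}" using m(1) by (simp add: monomials_def)
  ultimately obtain A where A: "A \<in> S" "A \<subseteq> Poly_Mapping.keys m"
    using m(2) unfolding HH_def by blast
  then have An: "A \<subseteq> {1..n}" "h A \<subseteq> A" using S hS by auto
  have "lm le (fSH A (h A) :: 'a mpoly) = mon_of_set A" by (rule lm_fSH(2)[OF to An])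
  then have "mon_dvd (lm le (fSH A (h A) :: 'a mpoly)) m"
    using A(2) finite_subset[OF An(1)] by (simp add: mon_dvd_mon_of_set_keys)
  moreover have "fSH A (h A) \<in> (GG n S h :: 'a mpoly set)" using A(1) unfolding GG_def by blast
  ultimately show ?thesis using lm_fSH(1)[OF to An] by blast
qed

lemma polyring_add: "p \<in> polyring n \<Longrightarrow> q \<in> polyring n \<Longrightarrow> p + q \<in> polyring n"
  using keys_add[of p q] unfolding polyring_def by auto

lemma polyring_zero: "0 \<in> polyring n"
  by (simp add: polyring_def)

lemma keys_uminus_poly_mapping: "Poly_Mapping.keys (- p) = Poly_Mapping.keys (p :: 'a \<Rightarrow>\<^sub>0 'b::ab_group_add)"
  by (auto simp: in_keys_iff)

lemma polyring_uminus: "p \<in> polyring n \<Longrightarrow> - p \<in> polyring n"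
  by (simp add: polyring_def keys_uminus_poly_mapping)

lemma polyring_diff: "p \<in> polyring n \<Longrightarrow> q \<in> polyring n \<Longrightarrow> p - q \<in> polyring n"
  using polyring_add[of p n "- q"] polyring_uminus[of q n] by (simp only: diff_conv_add_uminus)

lemma polyring_mult: "p \<in> polyring n \<Longrightarrow> q \<in> polyring n \<Longrightarrow> p * q \<in> polyring n"
proof -
  assume p: "p \<in> polyring n" and q: "q \<in> polyring n"
  have "a + b \<in> monomials n" if "a \<in> Poly_Mapping.keys p" "b \<in> Poly_Mapping.keys q" for a b
    using that p q keys_add[of a b] unfolding polyring_def monomials_def by blast
  then show ?thesis using keys_mult[of p q] unfolding polyring_def by blast
qed

lemma polyring_single: "m \<in> monomials n \<Longrightarrow> Poly_Mapping.single m c \<in> polyring n"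
  by (simp add: polyring_def)

lemma polyring_one: "1 \<in> polyring n"
  by (simp add: polyring_def monomials_def)

lemma polyring_X: "i \<in> {1..n} \<Longrightarrow> X i \<in> polyring n"
  by (simp add: polyring_def monomials_def X_def)

lemma polyring_sum: "(\<And>x. x \<in> A \<Longrightarrow> f x \<in> polyring n) \<Longrightarrow> sum f A \<in> polyring n"
  by (induction A rule: infinite_finite_induct) (auto intro: polyring_add polyring_zero)

lemma polyring_prod: "(\<And>x. x \<in> A \<Longrightarrow> f x \<in> polyring n) \<Longrightarrow> prod f A \<in> polyring n"
  by (induction A rule: infinite_finite_induct) (auto intro: polyring_mult polyring_one)

lemma polyring_power: "p \<in> polyring n \<Longrightarrow> p ^ k \<in> polyring n"
  by (induction k) (auto intro: polyring_mult polyring_one)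

lemma polyring_fSH: "A \<subseteq> {1..n} \<Longrightarrow> H \<subseteq> A \<Longrightarrow> (fSH A H :: 'a::field mpoly) \<in> polyring n"
  unfolding fSH_def xH_def by (intro polyring_mult polyring_prod polyring_diff polyring_X polyring_one) auto

lemma GG_subset_polyring:
  assumes "S \<subseteq> Pow {1..n}" and "\<forall>A\<in>S. h A \<subseteq> A"
  shows "(GG n S h :: 'a::field mpoly set) \<subseteq> polyring n"
proof
  fix g :: "'a mpoly" assume "g \<in> GG n S h"
  then show "g \<in> polyring n"
  proof (cases rule: GG_cases)
    case (1 A)
    then show ?thesis using assms polyring_fSH[of A n "h A"] by auto
  qed (simp add: polyring_diff polyring_power polyring_X)
qed

lemma gen_idealI: "f = (\<Sum>g\<in>G. q g * g) \<Longrightarrow> \<forall>g\<in>G. q g \<in> polyring n \<Longrightarrow> f \<in> gen_ideal n G"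
  unfolding gen_ideal_def by blast

lemma gen_ideal_zero: "0 \<in> gen_ideal n G"
  by (rule gen_idealI[where q = "\<lambda>_. 0"]) (simp_all add: polyring_zero)

lemma gen_ideal_add: "f \<in> gen_ideal n G \<Longrightarrow> f' \<in> gen_ideal n G \<Longrightarrow> f + f' \<in> gen_ideal n G"
proof -
  assume "f \<in> gen_ideal n G" "f' \<in> gen_ideal n G"
  then obtain q q' where "f = (\<Sum>g\<in>G. q g * g)" "\<forall>g\<in>G. q g \<in> polyring n"
    and "f' = (\<Sum>g\<in>G. q' g * g)" "\<forall>g\<in>G. q' g \<in> polyring n"
    unfolding gen_ideal_def by blast
  then show ?thesis
    by (intro gen_idealI[where q = "\<lambda>g. q g + q' g"]) (simp_all add: sum.distrib algebra_simps polyring_add)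
qed

lemma gen_ideal_mult: "p \<in> polyring n \<Longrightarrow> f \<in> gen_ideal n G \<Longrightarrow> p * f \<in> gen_ideal n G"
proof -
  assume p: "p \<in> polyring n" and "f \<in> gen_ideal n G"
  then obtain q where "f = (\<Sum>g\<in>G. q g * g)" "\<forall>g\<in>G. q g \<in> polyring n"
    unfolding gen_ideal_def by blast
  with p show ?thesis
    by (intro gen_idealI[where q = "\<lambda>g. p * q g"]) (simp_all add: sum_distrib_left mult.assoc polyring_mult)
qed

lemma gen_ideal_sum: "(\<And>x. x \<in> A \<Longrightarrow> f x \<in> gen_ideal n G) \<Longrightarrow> sum f A \<in> gen_ideal n G"
  by (induction A rule: infinite_finite_induct) (auto intro: gen_ideal_add gen_ideal_zero)

lemma gen_ideal_base: "finite G \<Longrightarrow> g \<in> G \<Longrightarrow> g \<in> gen_ideal n G"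
proof (rule gen_idealI[where q = "\<lambda>g'. if g' = g then 1 else 0"])
  assume "finite G" "g \<in> G"
  have "(\<Sum>g'\<in>G. (if g' = g then 1 else 0) * g') = (\<Sum>g'\<in>G. if g' = g then g' else 0)"
    by (rule sum.cong) auto
  with \<open>finite G\<close> \<open>g \<in> G\<close> show "g = (\<Sum>g'\<in>G. (if g' = g then 1 else 0) * g')"
    by (simp add: sum.delta')
qed (simp add: polyring_one polyring_zero)

lemma gen_ideal_subset_polyring: "G \<subseteq> polyring n \<Longrightarrow> gen_ideal n G \<subseteq> polyring n"
  unfolding gen_ideal_def by (auto intro!: polyring_sum polyring_mult)

lemma keys_gen_ideal_GG:
  assumes "S \<subseteq> Pow {1..n}" and "\<forall>A\<in>S. h A \<subseteq> A" and "f \<in> gen_ideal n (GG n S h)"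
  shows "Poly_Mapping.keys (f :: 'a::field mpoly) \<subseteq> monomials n"
  using assms(3) gen_ideal_subset_polyring[OF GG_subset_polyring[OF assms(1,2)]] by (auto simp: polyring_def)

section \<open>Evaluation at the points of the cube\<close>

text \<open>eval_set w p is the value of p at the characteristic vector of w.\<close>

definition eval_set :: "nat set \<Rightarrow> 'a::field mpoly \<Rightarrow> 'a" where
  "eval_set w p = (\<Sum>m\<in>Poly_Mapping.keys p. Poly_Mapping.lookup p m * (if Poly_Mapping.keys m \<subseteq> w then 1 else 0))"

lemma eval_set_superset:
  "finite M \<Longrightarrow> Poly_Mapping.keys p \<subseteq> M \<Longrightarrow>
    eval_set w p = (\<Sum>m\<in>M. Poly_Mapping.lookup p m * (if Poly_Mapping.keys m \<subseteq> w then 1 else 0))"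
  unfolding eval_set_def by (rule sum.mono_neutral_left) (auto simp: in_keys_iff)

lemma eval_set_add: "eval_set w (p + q) = eval_set w p + eval_set w q"
proof -
  let ?M = "Poly_Mapping.keys p \<union> Poly_Mapping.keys q"
  have "Poly_Mapping.keys (p + q) \<subseteq> ?M" by (rule keys_add)
  then show ?thesis
    by (simp add: eval_set_superset[of ?M] lookup_add sum.distrib algebra_simps)
qed

lemma eval_set_uminus: "eval_set w (- p) = - eval_set w p"
  by (simp add: eval_set_def keys_uminus_poly_mapping sum_negf)

lemma eval_set_diff: "eval_set w (p - q) = eval_set w p - eval_set w q"
  by (simp only: diff_conv_add_uminus eval_set_add eval_set_uminus)

lemma eval_set_zero: "eval_set w 0 = 0"
  by (simp add: eval_set_def)

lemma eval_set_sum: "eval_set w (sum f A) = (\<Sum>x\<in>A. eval_set w (f x))"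
  by (induction A rule: infinite_finite_induct) (simp_all add: eval_set_add eval_set_zero)

lemma eval_set_single:
  "eval_set w (Poly_Mapping.single m c) = c * (if Poly_Mapping.keys m \<subseteq> w then 1 else 0)"
  by (cases "c = 0") (auto simp: eval_set_def)

lemma poly_mapping_expansion:
  "p = (\<Sum>m\<in>Poly_Mapping.keys p. Poly_Mapping.single m (Poly_Mapping.lookup p m))"
  by (rule poly_mapping_eqI) (auto simp: lookup_sum lookup_single when_def in_keys_iff)

lemma eval_set_mult: "eval_set w (p * q) = eval_set w p * eval_set w q"
proof -
  let ?p = "Poly_Mapping.lookup p" and ?q = "Poly_Mapping.lookup q"
  let ?chi = "\<lambda>m. if Poly_Mapping.keys m \<subseteq> w then 1 else (0::'a)"
  have chi_add: "?chi (a + b) = ?chi a * ?chi b" for a b :: mon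
  proof -
    have "Poly_Mapping.keys (a + b) = Poly_Mapping.keys a \<union> Poly_Mapping.keys b"
      by (auto simp: in_keys_iff lookup_add)
    then show ?thesis by simp
  qed
  have "p * q = (\<Sum>a\<in>Poly_Mapping.keys p. Poly_Mapping.single a (?p a)) *
      (\<Sum>b\<in>Poly_Mapping.keys q. Poly_Mapping.single b (?q b))"
    by (simp flip: poly_mapping_expansion)
  also have "\<dots> = (\<Sum>a\<in>Poly_Mapping.keys p. \<Sum>b\<in>Poly_Mapping.keys q. Poly_Mapping.single (a + b) (?p a * ?q b))"
    by (simp only: sum_product mult_single)
  finally have "eval_set w (p * q) =
      (\<Sum>a\<in>Poly_Mapping.keys p. \<Sum>b\<in>Poly_Mapping.keys q. ?p a * ?q b * ?chi (a + b))"
    by (simp add: eval_set_sum eval_set_single)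
  also have "\<dots> = (\<Sum>a\<in>Poly_Mapping.keys p. ?p a * ?chi a) * (\<Sum>b\<in>Poly_Mapping.keys q. ?q b * ?chi b)"
    unfolding sum_product chi_add by (intro sum.cong refl) (simp only: mult_ac)
  finally show ?thesis by (simp add: eval_set_def)
qed

lemma eval_set_one: "eval_set w 1 = 1"
  by (simp flip: single_one add: eval_set_single)

lemma eval_set_prod: "eval_set w (prod f A) = (\<Prod>x\<in>A. eval_set w (f x))"
  by (induction A rule: infinite_finite_induct) (simp_all add: eval_set_one eval_set_mult)

lemma eval_set_power: "eval_set w (p ^ k) = eval_set w p ^ k"
  by (induction k) (simp_all add: eval_set_one eval_set_mult)

lemma eval_set_X: "eval_set w (X i) = (if i \<in> w then 1 else 0)"
  by (simp add: X_def eval_set_single)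

lemma eval_set_fSH_eq_0_iff:
  assumes "A \<subseteq> {1..n}" "H \<subseteq> A" "w \<subseteq> {1..n}"
  shows "eval_set w (fSH A H :: 'a::field mpoly) = 0 \<longleftrightarrow> w \<notin> Q n A H"
proof -
  have "finite A" using assms(1) finite_subset by blast
  then have "eval_set w (fSH A H :: 'a mpoly) =
      (\<Prod>j\<in>H. if j \<in> w then 1 else 0) * (\<Prod>j\<in>A - H. (if j \<in> w then 1 else 0) - 1)"
    using assms(2) by (simp add: fSH_def xH_def eval_set_mult eval_set_prod eval_set_diff eval_set_X eval_set_one)
  also have "\<dots> = 0 \<longleftrightarrow> \<not> (H \<subseteq> w \<and> (A - H) \<inter> w = {})"
    using \<open>finite A\<close> assms(2) finite_subset[of H A] by (auto simp: prod_zero_iff)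
  finally show ?thesis using Q_iff[OF assms] by simp
qed

lemma eval_set_gen_ideal:
  assumes S: "S \<subseteq> Pow {1..n}" and hS: "\<forall>A\<in>S. h A \<subseteq> A"
    and f: "f \<in> gen_ideal n (GG n S h)" and w: "w \<in> FF n S h"
  shows "eval_set w (f :: 'a::field mpoly) = 0"
proof -
  have "eval_set w g = 0" if "g \<in> (GG n S h :: 'a mpoly set)" for g
    using that
  proof (cases rule: GG_cases)
    case (1 A)
    then show ?thesis using S hS w eval_set_fSH_eq_0_iff[of A n "h A" w] by (auto simp: FF_iff)
  qed (simp add: eval_set_diff eval_set_power eval_set_X)
  moreover obtain q where "f = (\<Sum>g\<in>GG n S h. q g * g)" using f unfolding gen_ideal_def by blast
  ultimately show ?thesis by (simp add: eval_set_sum eval_set_mult)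
qed

section \<open>Interpolation on the cube\<close>

text \<open>The interpolation polynomial of the point v: it is 1 at v and 0 at all other points of the cube.\<close>

definition point_poly :: "nat \<Rightarrow> nat set \<Rightarrow> 'a::field mpoly" where
  "point_poly n v = xH v * (\<Prod>i\<in>{1..n} - v. 1 - X i)"

lemma xH_eq_sum_point_poly:
  assumes T: "T \<subseteq> {1..n}"
  shows "(xH T :: 'a::field mpoly) = (\<Sum>v\<in>Pow {1..n}. if T \<subseteq> v then point_poly n v else 0)"
proof -
  define N where "N = {1..n} - T"
  have fN: "finite N" unfolding N_def by simp
  have fT: "finite T" using T finite_subset by blast
  have "(xH T :: 'a mpoly) = xH T * (\<Prod>i\<in>N. X i + (1 - X i))" by simp
  also have "(\<Prod>i\<in>N. X i + (1 - X i)) = (\<Sum>B\<in>Pow N. xH B * (\<Prod>i\<in>N - B. 1 - X i :: 'a mpoly))"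
    unfolding xH_def by (rule prod_add[OF fN])
  also have "xH T * \<dots> = (\<Sum>B\<in>Pow N. xH T * (xH B * (\<Prod>i\<in>N - B. 1 - X i)))"
    by (rule sum_distrib_left)
  also have "\<dots> = (\<Sum>B\<in>Pow N. point_poly n (T \<union> B))"
  proof (rule sum.cong[OF refl])
    fix B assume B: "B \<in> Pow N"
    then have "finite B" "T \<inter> B = {}" "{1..n} - (T \<union> B) = N - B"
      using fN finite_subset unfolding N_def by auto
    then show "xH T * (xH B * (\<Prod>i\<in>N - B. 1 - X i)) = (point_poly n (T \<union> B) :: 'a mpoly)"
      unfolding point_poly_def by (simp add: xH_union[OF fT] mult.assoc)
  qed
  also have "\<dots> = (\<Sum>v\<in>(\<lambda>B. T \<union> B) ` Pow N. point_poly n v)"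
    by (rule sum.reindex_cong[symmetric]) (auto simp: inj_on_def N_def)
  also have "(\<lambda>B. T \<union> B) ` Pow N = {v \<in> Pow {1..n}. T \<subseteq> v}"
  proof (intro equalityI subsetI)
    fix v assume "v \<in> {v \<in> Pow {1..n}. T \<subseteq> v}"
    then have "v = T \<union> (v - T)" "v - T \<in> Pow N" unfolding N_def by auto
    then show "v \<in> (\<lambda>B. T \<union> B) ` Pow N" by blast
  qed (use T in \<open>auto simp: N_def\<close>)
  also have "(\<Sum>v\<in>{v \<in> Pow {1..n}. T \<subseteq> v}. point_poly n v) =
      (\<Sum>v\<in>Pow {1..n}. if T \<subseteq> v then point_poly n v else (0::'a mpoly))"
    by (rule sum.inter_filter) simp
  finally show ?thesis .
qed

lemma point_poly_in_gen_ideal: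
  assumes S: "S \<subseteq> Pow {1..n}" and hS: "\<forall>A\<in>S. h A \<subseteq> A"
    and v: "v \<subseteq> {1..n}" "v \<notin> FF n S h"
  shows "(point_poly n v :: 'a::field mpoly) \<in> gen_ideal n (GG n S h)"
proof -
  obtain A where A: "A \<in> S" "v \<in> Q n A (h A)" using v by (auto simp: FF_iff)
  define H where "H = h A"
  define D where "D = A - H"
  define N where "N = {1..n} - v"
  have An: "A \<subseteq> {1..n}" "H \<subseteq> A" using A S hS H_def by auto
  have Hv: "H \<subseteq> v" "D \<inter> v = {}" using Q_iff[OF An v(1)] A H_def D_def by auto
  have fv: "finite v" using v(1) finite_subset by blast
  have "D \<subseteq> N" using Hv An by (auto simp: D_def N_def)
  then have split: "(\<Prod>i\<in>N. 1 - X i :: 'a mpoly) = (\<Prod>i\<in>N - D. 1 - X i) * (\<Prod>i\<in>D. 1 - X i)"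
    by (rule prod.subset_diff) (simp add: N_def)
  have "(\<Prod>i\<in>D. 1 - X i :: 'a mpoly) = (\<Prod>i\<in>D. (-1) * (X i - 1))" by simp
  also have "\<dots> = (-1) ^ card D * (\<Prod>i\<in>D. X i - 1)" by (simp only: prod.distrib prod_constant)
  finally have sign: "(\<Prod>i\<in>D. 1 - X i :: 'a mpoly) = (-1) ^ card D * (\<Prod>i\<in>D. X i - 1)" .
  have "v = H \<union> (v - H)" using Hv by auto
  then have xH_v: "(xH v :: 'a mpoly) = xH H * xH (v - H)"
    using fv finite_subset[OF Hv(1) fv] by (metis Diff_disjoint finite_Diff xH_union)
  have eq: "(point_poly n v :: 'a mpoly) = (xH (v - H) * (\<Prod>i\<in>N - D. 1 - X i) * (-1) ^ card D) * fSH A H"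
    unfolding point_poly_def N_def[symmetric] split sign fSH_def D_def[symmetric] xH_v by (simp only: mult_ac)
  have "fSH A H \<in> (GG n S h :: 'a mpoly set)" unfolding GG_def H_def using A by blast
  then have "fSH A H \<in> gen_ideal n (GG n S h :: 'a mpoly set)"
    using finite_subset[OF S] by (intro gen_ideal_base finite_GG) auto
  then show ?thesis unfolding eq using v(1)
    by (intro gen_ideal_mult polyring_mult polyring_power polyring_uminus polyring_one polyring_prod
        polyring_diff polyring_X) (auto simp: xH_def N_def intro!: polyring_prod polyring_X)
qed

lemma single_sum: "Poly_Mapping.single k (sum f A) = (\<Sum>x\<in>A. Poly_Mapping.single k (f x))"
  by (induction A rule: infinite_finite_induct) (simp_all add: single_add)

lemma squarefree_poly_in_gen_ideal:
  assumes S: "S \<subseteq> Pow {1..n}" and hS: "\<forall>A\<in>S. h A \<subseteq> A" and \<T>: "\<T> \<subseteq> Pow {1..n}"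
    and c: "\<forall>w\<in>FF n S h. (\<Sum>T\<in>\<T>. c T * (if T \<subseteq> w then 1 else 0)) = (0::'a::field)"
  shows "(\<Sum>T\<in>\<T>. Poly_Mapping.single (mon_of_set T) (c T)) \<in> gen_ideal n (GG n S h :: 'a mpoly set)"
proof -
  let ?c = "\<lambda>v. \<Sum>T\<in>\<T>. c T * (if T \<subseteq> v then 1 else 0)"
  have "Poly_Mapping.single (mon_of_set T) (c T) =
      (\<Sum>v\<in>Pow {1..n}. Poly_Mapping.single 0 (c T * (if T \<subseteq> v then 1 else 0)) * point_poly n v)"
    if "T \<in> \<T>" for T
  proof -
    have "T \<subseteq> {1..n}" using that \<T> by blast
    then have "finite T" using finite_subset by blast
    then have "Poly_Mapping.single (mon_of_set T) (c T) = Poly_Mapping.single 0 (c T) * (xH T :: 'a mpoly)"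
      by (simp add: xH_eq_single mult_single)
    also have "\<dots> = (\<Sum>v\<in>Pow {1..n}. Poly_Mapping.single 0 (c T * (if T \<subseteq> v then 1 else 0)) * point_poly n v)"
      unfolding xH_eq_sum_point_poly[OF \<open>T \<subseteq> {1..n}\<close>] sum_distrib_left by (intro sum.cong) auto
    finally show ?thesis .
  qed
  then have "(\<Sum>T\<in>\<T>. Poly_Mapping.single (mon_of_set T) (c T)) =
      (\<Sum>v\<in>Pow {1..n}. Poly_Mapping.single 0 (?c v) * point_poly n v)"
    by (simp add: sum.swap[of _ \<T>] single_sum sum_distrib_right)
  also have "\<dots> \<in> gen_ideal n (GG n S h)"
  proof (rule gen_ideal_sum)
    fix v assume v: "v \<in> Pow {1..n}"
    show "Poly_Mapping.single 0 (?c v) * point_poly n v \<in> gen_ideal n (GG n S h :: 'a mpoly set)"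
    proof (cases "v \<in> FF n S h")
      case True
      then show ?thesis using c by (simp add: gen_ideal_zero)
    next
      case False
      then show ?thesis using v
        by (intro gen_ideal_mult polyring_single point_poly_in_gen_ideal[OF S hS]) (auto simp: monomials_def)
    qed
  qed
  finally show ?thesis .
qed

section \<open>Values of the standard monomials on F(S,h)\<close>

lemma sum_apply: "(sum f A) x = (\<Sum>i\<in>A. f i x)"
  by (induction A rule: infinite_finite_induct) auto

interpretation fun_vs: vector_space "\<lambda>(c::'a::field) (f::nat set \<Rightarrow> 'a) x. c * f x"
  by unfold_locales (auto simp: fun_eq_iff algebra_simps)

abbreviation scale_fun :: "'a::field \<Rightarrow> (nat set \<Rightarrow> 'a) \<Rightarrow> nat set \<Rightarrow> 'a" where
  "scale_fun c f \<equiv> (\<lambda>x. c * f x)"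

text \<open>The function w \<mapsto> x_U(w) on F(S,h), extended by 0.\<close>

definition mon_values :: "nat \<Rightarrow> nat set set \<Rightarrow> (nat set \<Rightarrow> nat set) \<Rightarrow> nat set \<Rightarrow> nat set \<Rightarrow> 'a::field" where
  "mon_values n S h U = (\<lambda>w. if w \<in> FF n S h \<and> U \<subseteq> w then 1 else 0)"

definition unit_fun :: "nat set \<Rightarrow> nat set \<Rightarrow> 'a::field" where
  "unit_fun v = (\<lambda>w. if w = v then 1 else 0)"

lemma alternating_sum_Pow:
  assumes "finite A"
  shows "(\<Sum>B\<in>Pow A. (-1) ^ card B * (if B \<subseteq> w then 1 else 0)) = (if A \<inter> w = {} then 1 else (0::'a::field))"
proof -
  have "(\<Sum>B\<in>Pow A. (-1) ^ card B * (if B \<subseteq> w then 1 else 0)) = (\<Sum>B\<in>{B\<in>Pow A. B \<subseteq> w}. (-1::'a) ^ card B)"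
    using assms by (simp add: sum.inter_filter[symmetric] if_distrib cong: if_cong)
  also have "{B\<in>Pow A. B \<subseteq> w} = Pow (A \<inter> w)" by auto
  also have "(\<Sum>B\<in>Pow (A \<inter> w). (-1::'a) ^ card B) = (\<Sum>B\<in>Pow (A \<inter> w). (\<Prod>x\<in>B. -1) * (\<Prod>x\<in>(A \<inter> w) - B. 1))"
    by simp
  also have "\<dots> = (\<Prod>x\<in>A \<inter> w. (-1) + 1)"
    using assms by (intro prod_add[symmetric]) auto
  also have "\<dots> = (if A \<inter> w = {} then 1 else 0)"
    using assms by (simp add: card_gt_0_iff)
  finally show ?thesis .
qed

text \<open>Up to sign, these are the values on F(S,h) of the multiple x_V f_{A,h(A)} of a generator.\<close>

lemma sum_Pow_mon_values_eq_0:
  assumes S: "S \<subseteq> Pow {1..n}" and hS: "\<forall>A\<in>S. h A \<subseteq> A" and A: "A \<in> S" and V: "h A \<subseteq> V"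
  shows "(\<Sum>B\<in>Pow (A - h A). (-1) ^ card B * mon_values n S h (V \<union> B) w) = (0::'a::field)"
proof (cases "w \<in> FF n S h")
  case True
  have An: "A \<subseteq> {1..n}" "h A \<subseteq> A" using S hS A by auto
  then have fD: "finite (A - h A)" using finite_subset by blast
  from True A have "w \<notin> Q n A (h A)" "w \<subseteq> {1..n}" by (auto simp: FF_iff)
  then have "\<not> (V \<subseteq> w \<and> (A - h A) \<inter> w = {})" using Q_iff[OF An] V by auto
  moreover have "(\<Sum>B\<in>Pow (A - h A). (-1) ^ card B * mon_values n S h (V \<union> B) w) =
      (if V \<subseteq> w then 1 else 0) * (\<Sum>B\<in>Pow (A - h A). (-1) ^ card B * (if B \<subseteq> w then 1 else (0::'a)))"
    using True by (simp add: sum_distrib_left mon_values_def)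
  ultimately show ?thesis by (simp add: alternating_sum_Pow[OF fD])
qed (simp add: mon_values_def)

text \<open>If U contains some A \<in> S, the values of x_U are, by the previous lemma, a combination of
  those of the smaller monomials x_{V \<union> B}, B \<subset> A - h(A), where V = U - (A - h(A)).\<close>

lemma mon_values_in_span:
  assumes S: "S \<subseteq> Pow {1..n}" and hS: "\<forall>A\<in>S. h A \<subseteq> A"
  shows "U \<subseteq> {1..n} \<Longrightarrow>
    (mon_values n S h U :: nat set \<Rightarrow> 'a::field) \<in> fun_vs.span (mon_values n S h ` {T \<in> HH n S. T \<subseteq> U})"
proof (induction "card U" arbitrary: U rule: less_induct)
  case less
  let ?e = "mon_values n S h :: nat set \<Rightarrow> nat set \<Rightarrow> 'a"
  have fU: "finite U" using less.prems finite_subset by blast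
  show ?case
  proof (cases "U \<in> HH n S")
    case True
    then show ?thesis by (intro fun_vs.span_base) auto
  next
    case False
    then obtain A where A: "A \<in> S" "A \<subseteq> U" using less.prems unfolding HH_def by auto
    define D where "D = A - h A"
    define V where "V = U - D"
    let ?R = "\<lambda>w. \<Sum>B\<in>Pow D - {D}. (-1) ^ card B * ?e (V \<union> B) w"
    have fD: "finite D" using fU A D_def finite_subset by blast
    have DU: "V \<union> D = U" "h A \<subseteq> V" using A hS D_def V_def by auto
    have "?e U = scale_fun (- ((-1) ^ card D)) ?R"
    proof
      fix w
      have "(-1) ^ card D * ?e U w + ?R w = 0"
        using sum_Pow_mon_values_eq_0[OF S hS A(1) DU(2), of w, folded D_def] fD DU(1)
        by (simp add: sum.remove[of "Pow D" D])
      then have minus_R: "(-1) ^ card D * ?e U w = - ?R w" by (simp only: eq_neg_iff_add_eq_0)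
      have "?e U w = (-1) ^ card D * ((-1) ^ card D * ?e U w)"
        by (simp add: mult.assoc[symmetric] flip: power_mult_distrib)
      then show "?e U w = - ((-1) ^ card D) * ?R w" unfolding minus_R by simp
    qed
    also have "\<dots> = scale_fun (- ((-1) ^ card D)) (\<Sum>B\<in>Pow D - {D}. scale_fun ((-1) ^ card B) (?e (V \<union> B)))"
      by (simp add: sum_apply)
    also have "\<dots> \<in> fun_vs.span (?e ` {T \<in> HH n S. T \<subseteq> U})"
    proof (intro fun_vs.span_scale fun_vs.span_sum)
      fix B assume B: "B \<in> Pow D - {D}"
      then have sub: "V \<union> B \<subset> U" using DU V_def by auto
      then have "card (V \<union> B) < card U" using fU by (simp add: psubset_card_mono)
      then have "?e (V \<union> B) \<in> fun_vs.span (?e ` {T \<in> HH n S. T \<subseteq> V \<union> B})"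
        using less.hyps[of "V \<union> B"] sub less.prems by auto
      also have "\<dots> \<subseteq> fun_vs.span (?e ` {T \<in> HH n S. T \<subseteq> U})"
        using sub by (intro fun_vs.span_mono) auto
      finally show "?e (V \<union> B) \<in> fun_vs.span (?e ` {T \<in> HH n S. T \<subseteq> U})" .
    qed
    finally show ?thesis .
  qed
qed

lemma unit_fun_in_span:
  assumes S: "S \<subseteq> Pow {1..n}" and hS: "\<forall>A\<in>S. h A \<subseteq> A" and v: "v \<in> FF n S h"
  shows "(unit_fun v :: nat set \<Rightarrow> 'a::field) \<in> fun_vs.span (mon_values n S h ` HH n S)"
proof -
  let ?e = "mon_values n S h :: nat set \<Rightarrow> nat set \<Rightarrow> 'a"
  let ?N = "{1..n} - v"
  have vn: "v \<subseteq> {1..n}" using v by (simp add: FF_iff)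
  have "(unit_fun v :: nat set \<Rightarrow> 'a) = (\<Sum>B\<in>Pow ?N. scale_fun ((-1) ^ card B) (?e (v \<union> B)))"
  proof
    fix w
    show "unit_fun v w = (\<Sum>B\<in>Pow ?N. scale_fun ((-1) ^ card B) (?e (v \<union> B))) w"
    proof (cases "w \<in> FF n S h")
      case True
      then have "w \<subseteq> {1..n}" by (simp add: FF_iff)
      have "(\<Sum>B\<in>Pow ?N. scale_fun ((-1) ^ card B) (?e (v \<union> B))) w =
          (if v \<subseteq> w then 1 else 0) * (\<Sum>B\<in>Pow ?N. (-1) ^ card B * (if B \<subseteq> w then 1 else 0))"
        using True by (simp add: sum_apply sum_distrib_left mon_values_def)
      also have "\<dots> = unit_fun v w"
        using vn \<open>w \<subseteq> {1..n}\<close> by (auto simp: alternating_sum_Pow unit_fun_def)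
      finally show ?thesis by simp
    qed (use v in \<open>auto simp: sum_apply unit_fun_def mon_values_def\<close>)
  qed
  also have "\<dots> \<in> fun_vs.span (?e ` HH n S)"
  proof (intro fun_vs.span_scale fun_vs.span_sum)
    fix B assume "B \<in> Pow ?N"
    then have "v \<union> B \<subseteq> {1..n}" using vn by auto
    then have "?e (v \<union> B) \<in> fun_vs.span (?e ` {T \<in> HH n S. T \<subseteq> v \<union> B})"
      by (rule mon_values_in_span[OF S hS])
    also have "\<dots> \<subseteq> fun_vs.span (?e ` HH n S)" by (intro fun_vs.span_mono) auto
    finally show "?e (v \<union> B) \<in> fun_vs.span (?e ` HH n S)" .
  qed
  finally show ?thesis .
qed

lemma inj_unit_fun: "inj (unit_fun :: nat set \<Rightarrow> nat set \<Rightarrow> 'a::field)"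
  by (rule injI) (metis unit_fun_def zero_neq_one)

lemma independent_unit_funs:
  assumes "finite V"
  shows "fun_vs.independent (unit_fun ` V :: (nat set \<Rightarrow> 'a::field) set)"
proof
  assume "fun_vs.dependent (unit_fun ` V :: (nat set \<Rightarrow> 'a) set)"
  then obtain u where u: "\<exists>x\<in>unit_fun ` V. u x \<noteq> 0" "(\<Sum>x\<in>unit_fun ` V. scale_fun (u x) x) = (0 :: nat set \<Rightarrow> 'a)"
    unfolding fun_vs.dependent_finite[OF finite_imageI[OF assms]] by blast
  then obtain v where v: "v \<in> V" "u (unit_fun v) \<noteq> 0" by auto
  have "0 = (\<Sum>x\<in>unit_fun ` V. scale_fun (u x) x) v" using u by simp
  also have "\<dots> = (\<Sum>x\<in>V. u (unit_fun x) * unit_fun x v)"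
    by (simp add: sum_apply sum.reindex inj_on_subset[OF inj_unit_fun])
  also have "\<dots> = (\<Sum>x\<in>V. if x = v then u (unit_fun x) else 0)"
    by (rule sum.cong) (auto simp: unit_fun_def)
  also have "\<dots> = u (unit_fun v)" using assms v by (simp add: sum.delta')
  finally show False using v by simp
qed

lemma mon_values_in_span_unit_funs:
  "(mon_values n S h T :: nat set \<Rightarrow> 'a::field) \<in> fun_vs.span (unit_fun ` FF n S h)"
proof -
  have "(mon_values n S h T :: nat set \<Rightarrow> 'a) = (\<Sum>v\<in>FF n S h. scale_fun (mon_values n S h T v) (unit_fun v))"
  proof
    fix w
    have "(\<Sum>v\<in>FF n S h. scale_fun (mon_values n S h T v) (unit_fun v)) w =
        (\<Sum>v\<in>FF n S h. if v = w then (mon_values n S h T w :: 'a) else 0)"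
      unfolding sum_apply by (intro sum.cong refl) (simp add: unit_fun_def)
    also have "\<dots> = mon_values n S h T w" using finite_FF[of n S h] by (simp add: mon_values_def)
    finally show "(mon_values n S h T w :: 'a) = (\<Sum>v\<in>FF n S h. scale_fun (mon_values n S h T v) (unit_fun v)) w" ..
  qed
  also have "\<dots> \<in> fun_vs.span (unit_fun ` FF n S h)"
    by (intro fun_vs.span_sum fun_vs.span_scale fun_vs.span_base) auto
  finally show ?thesis .
qed

lemma dim_mon_values:
  assumes "S \<subseteq> Pow {1..n}" and "\<forall>A\<in>S. h A \<subseteq> A"
  shows "fun_vs.dim (mon_values n S h ` HH n S :: (nat set \<Rightarrow> 'a::field) set) = card (FF n S h)"
proof -
  have "fun_vs.span (mon_values n S h ` HH n S :: (nat set \<Rightarrow> 'a) set) = fun_vs.span (unit_fun ` FF n S h)"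
    using unit_fun_in_span[OF assms] mon_values_in_span_unit_funs by (auto simp: fun_vs.span_eq)
  then have "fun_vs.dim (mon_values n S h ` HH n S :: (nat set \<Rightarrow> 'a) set) = card (unit_fun ` FF n S h :: (nat set \<Rightarrow> 'a) set)"
    by (intro fun_vs.dim_eq_card independent_unit_funs finite_FF) simp
  also have "\<dots> = card (FF n S h)"
    by (simp add: card_image inj_on_subset[OF inj_unit_fun])
  finally show ?thesis .
qed

lemma independent_mon_values_iff_card_eq:
  assumes "S \<subseteq> Pow {1..n}" and "\<forall>A\<in>S. h A \<subseteq> A"
  shows "inj_on (mon_values n S h :: nat set \<Rightarrow> nat set \<Rightarrow> 'a::field) (HH n S) \<and>
      fun_vs.independent (mon_values n S h ` HH n S :: (nat set \<Rightarrow> 'a) set) \<longleftrightarrow>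
    card (HH n S) = card (FF n S h)"
proof -
  let ?E = "mon_values n S h ` HH n S :: (nat set \<Rightarrow> 'a) set"
  have fE: "finite ?E" by (simp add: finite_HH)
  have dim: "fun_vs.dim ?E = card (FF n S h)" by (rule dim_mon_values[OF assms])
  have "card (FF n S h) \<le> card ?E" using fun_vs.dim_le_card'[OF fE] dim by simp
  moreover have cE: "card ?E \<le> card (HH n S)" by (rule card_image_le[OF finite_HH])
  ultimately have "card (HH n S) = card (FF n S h) \<longleftrightarrow> card ?E = card (HH n S) \<and> card ?E = fun_vs.dim ?E"
    using dim by linarith
  also have "card ?E = card (HH n S) \<longleftrightarrow> inj_on (mon_values n S h :: nat set \<Rightarrow> nat set \<Rightarrow> 'a) (HH n S)"
    using finite_HH card_image eq_card_imp_inj_on by metis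
  also have "card ?E = fun_vs.dim ?E \<longleftrightarrow> fun_vs.independent ?E"
  proof
    assume card_eq: "card ?E = fun_vs.dim ?E"
    obtain B where "B \<subseteq> ?E" "fun_vs.independent B" "card B = fun_vs.dim ?E"
      by (rule fun_vs.basis_exists)
    with card_eq fE have "B = ?E" by (metis card_subset_eq)
    with \<open>fun_vs.independent B\<close> show "fun_vs.independent ?E" by simp
  qed (rule fun_vs.dim_eq_card_independent[symmetric])
  finally show ?thesis by blast
qed

lemma dependent_mon_values_coeffs:
  assumes "\<not> (inj_on (mon_values n S h :: nat set \<Rightarrow> nat set \<Rightarrow> 'a::field) (HH n S) \<and>
      fun_vs.independent (mon_values n S h ` HH n S :: (nat set \<Rightarrow> 'a) set))"
  obtains c :: "nat set \<Rightarrow> 'a::field" where "\<exists>T\<in>HH n S. c T \<noteq> 0"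
    and "\<forall>w\<in>FF n S h. (\<Sum>T\<in>HH n S. c T * (if T \<subseteq> w then 1 else 0)) = 0"
proof -
  let ?e = "mon_values n S h :: nat set \<Rightarrow> nat set \<Rightarrow> 'a"
  have "\<exists>c. (\<exists>T\<in>HH n S. c T \<noteq> 0) \<and> (\<forall>w. (\<Sum>T\<in>HH n S. c T * ?e T w) = 0)"
  proof (cases "inj_on ?e (HH n S)")
    case False
    then obtain T1 T2 where T: "T1 \<in> HH n S" "T2 \<in> HH n S" "T1 \<noteq> T2" "?e T1 = ?e T2"
      unfolding inj_on_def by blast
    let ?c = "\<lambda>T. if T = T1 then 1 else if T = T2 then -1 else (0::'a)"
    have "(\<Sum>T\<in>HH n S. ?c T * ?e T w) = 0" for w
    proof -
      have "(\<Sum>T\<in>HH n S. ?c T * ?e T w) =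
          (\<Sum>T\<in>HH n S. (if T = T1 then ?e T1 w else 0) + (if T = T2 then - ?e T2 w else 0))"
        using T(3) by (intro sum.cong) auto
      also have "\<dots> = ?e T1 w - ?e T2 w" using T finite_HH[of n S] by (simp add: sum.distrib)
      finally show ?thesis using T(4) by simp
    qed
    with T show ?thesis by (intro exI[of _ ?c]) auto
  next
    case True
    with assms have "fun_vs.dependent (?e ` HH n S)" by blast
    then obtain u where u: "\<exists>x\<in>?e ` HH n S. u x \<noteq> 0" "(\<Sum>x\<in>?e ` HH n S. scale_fun (u x) x) = 0"
      unfolding fun_vs.dependent_finite[OF finite_imageI[OF finite_HH]] by blast
    have "(\<Sum>T\<in>HH n S. u (?e T) * ?e T w) = 0" for w
      using fun_cong[OF u(2), of w] by (simp add: sum_apply sum.reindex[OF True])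
    with u(1) show ?thesis by (intro exI[of _ "\<lambda>T. u (?e T)"]) auto
  qed
  then obtain c where c: "\<exists>T\<in>HH n S. c T \<noteq> 0" "\<forall>w. (\<Sum>T\<in>HH n S. c T * ?e T w) = 0" by blast
  show thesis
  proof (rule that[OF c(1)], intro ballI)
    fix w assume "w \<in> FF n S h"
    with spec[OF c(2), of w] show "(\<Sum>T\<in>HH n S. c T * (if T \<subseteq> w then 1 else 0)) = 0"
      by (simp add: mon_values_def)
  qed
qed

section \<open>Groebner bases\<close>

lemma keys_sum_single_mon_of_set:
  "Poly_Mapping.keys (\<Sum>T\<in>\<T>. Poly_Mapping.single (mon_of_set T) (c T)) \<subseteq> mon_of_set ` \<T>"
  using keys_sum[of "\<lambda>T. Poly_Mapping.single (mon_of_set T) (c T)" \<T>] by auto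

lemma lookup_sum_single_mon_of_set:
  assumes "\<forall>T\<in>\<T>. finite T" and "T \<in> \<T>" and "finite \<T>"
  shows "Poly_Mapping.lookup (\<Sum>T\<in>\<T>. Poly_Mapping.single (mon_of_set T) (c T)) (mon_of_set T) = c T"
proof -
  have "Poly_Mapping.lookup (\<Sum>T\<in>\<T>. Poly_Mapping.single (mon_of_set T) (c T)) (mon_of_set T) =
      (\<Sum>T'\<in>\<T>. if T' = T then c T' else 0)"
    unfolding lookup_sum using assms by (intro sum.cong refl) (auto simp: lookup_single when_def mon_of_set_eq_iff)
  also have "\<dots> = c T" using assms by simp
  finally show ?thesis .
qed

text \<open>A linear relation among the values of the standard monomials on F(S,h) yields a nonzero
  element of the ideal whose leading monomial is standard.\<close>

lemma groebner_basis_imp_independent: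
  assumes to: "term_order n le" and S: "S \<subseteq> Pow {1..n}" and hS: "\<forall>A\<in>S. h A \<subseteq> A"
    and GB: "groebner_basis le (GG n S h :: 'a::field mpoly set) (gen_ideal n (GG n S h))"
  shows "inj_on (mon_values n S h :: nat set \<Rightarrow> nat set \<Rightarrow> 'a) (HH n S) \<and>
    fun_vs.independent (mon_values n S h ` HH n S :: (nat set \<Rightarrow> 'a) set)"
proof (rule ccontr)
  assume "\<not> ?thesis"
  then obtain c :: "nat set \<Rightarrow> 'a" where c: "\<exists>T\<in>HH n S. c T \<noteq> 0"
    "\<forall>w\<in>FF n S h. (\<Sum>T\<in>HH n S. c T * (if T \<subseteq> w then 1 else 0)) = 0"
    by (rule dependent_mon_values_coeffs)
  define p :: "'a mpoly" where "p = (\<Sum>T\<in>HH n S. Poly_Mapping.single (mon_of_set T) (c T))"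
  have HHn: "HH n S \<subseteq> Pow {1..n}" by (auto simp: HH_def)
  have p_ideal: "p \<in> gen_ideal n (GG n S h)"
    unfolding p_def by (rule squarefree_poly_in_gen_ideal[OF S hS HHn c(2)])
  have keys_p: "Poly_Mapping.keys p \<subseteq> mon_of_set ` HH n S"
    unfolding p_def by (rule keys_sum_single_mon_of_set)
  moreover have "mon_of_set ` HH n S \<subseteq> monomials n"
    using HHn by (auto simp: mon_of_set_in_monomials)
  ultimately have keys_p_mon: "Poly_Mapping.keys p \<subseteq> monomials n" by (rule order_trans)
  obtain T0 where T0: "T0 \<in> HH n S" "c T0 \<noteq> 0" using c(1) by blast
  have "\<forall>T\<in>HH n S. finite T" using finite_HH_member by blast
  then have "Poly_Mapping.lookup p (mon_of_set T0) = c T0"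
    unfolding p_def using T0(1) finite_HH by (rule lookup_sum_single_mon_of_set)
  with T0(2) have "p \<noteq> 0" by auto
  then have "lm le p \<in> mon_of_set ` HH n S"
    using lm_in_keys_and_max(1)[OF to keys_p_mon] keys_p by blast
  then obtain T where T: "T \<in> HH n S" "lm le p = mon_of_set T" by blast
  have "\<forall>f\<in>gen_ideal n (GG n S h :: 'a mpoly set). f \<noteq> 0 \<longrightarrow>
      (\<exists>g\<in>(GG n S h :: 'a mpoly set). g \<noteq> 0 \<and> mon_dvd (lm le g) (lm le f))"
    using GB unfolding groebner_basis_def by (elim conjE)
  then obtain g where "g \<in> (GG n S h :: 'a mpoly set)" "mon_dvd (lm le g) (mon_of_set T)"
    using p_ideal \<open>p \<noteq> 0\<close> T(2) by metis
  then show False using GG_lm_not_dvd_standard[OF to S hS _ T(1)] by blast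
qed

lemma sum_mon_values_gen_ideal:
  assumes S: "S \<subseteq> Pow {1..n}" and hS: "\<forall>A\<in>S. h A \<subseteq> A"
    and f: "f \<in> gen_ideal n (GG n S h)"
  shows "(\<Sum>m\<in>Poly_Mapping.keys f. scale_fun (Poly_Mapping.lookup f m) (mon_values n S h (Poly_Mapping.keys m))) =
    (0 :: nat set \<Rightarrow> 'a::field)"
proof
  fix w
  show "(\<Sum>m\<in>Poly_Mapping.keys f. scale_fun (Poly_Mapping.lookup f m) (mon_values n S h (Poly_Mapping.keys m))) w =
      (0 :: nat set \<Rightarrow> 'a) w"
  proof (cases "w \<in> FF n S h")
    case True
    then have "(\<Sum>m\<in>Poly_Mapping.keys f. scale_fun (Poly_Mapping.lookup f m) (mon_values n S h (Poly_Mapping.keys m))) w =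
        eval_set w f"
      by (simp add: sum_apply eval_set_def mon_values_def)
    also have "\<dots> = 0" by (rule eval_set_gen_ideal[OF S hS f True])
    finally show ?thesis by simp
  qed (simp add: sum_apply mon_values_def)
qed

text \<open>Conversely, if f in the ideal had a standard leading monomial x_T, then evaluating f on
  F(S,h) would express the values of x_T through those of smaller monomials, which lie in the span
  of the other standard monomials.\<close>

lemma independent_imp_lm_nonstandard:
  assumes to: "term_order n le" and S: "S \<subseteq> Pow {1..n}" and hS: "\<forall>A\<in>S. h A \<subseteq> A"
    and inj: "inj_on (mon_values n S h :: nat set \<Rightarrow> nat set \<Rightarrow> 'a::field) (HH n S)"
    and ind: "fun_vs.independent (mon_values n S h ` HH n S :: (nat set \<Rightarrow> 'a) set)"
    and f: "f \<in> gen_ideal n (GG n S h :: 'a mpoly set)" "f \<noteq> 0"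
  shows "lm le f \<notin> mon_of_set ` HH n S"
proof
  let ?e = "mon_values n S h :: nat set \<Rightarrow> nat set \<Rightarrow> 'a"
  let ?R = "\<Sum>m\<in>Poly_Mapping.keys f - {lm le f}. scale_fun (Poly_Mapping.lookup f m) (?e (Poly_Mapping.keys m))"
  assume "lm le f \<in> mon_of_set ` HH n S"
  then obtain T where T: "T \<in> HH n S" "lm le f = mon_of_set T" by blast
  have T_fin: "finite T" using T(1) by (rule finite_HH_member)
  have keys_f: "Poly_Mapping.keys f \<subseteq> monomials n" by (rule keys_gen_ideal_GG[OF S hS f(1)])
  note lm_f = lm_in_keys_and_max[OF to keys_f f(2)]
  have "scale_fun (Poly_Mapping.lookup f (lm le f)) (?e T) + ?R = 0"
    using sum_mon_values_gen_ideal[OF S hS f(1)] lm_f(1) T(2) T_fin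
    by (simp add: sum.remove[OF finite_keys lm_f(1)] keys_mon_of_set)
  moreover have "Poly_Mapping.lookup f (lm le f) \<noteq> 0" using lm_f(1) by (simp add: in_keys_iff)
  ultimately have "?e T = scale_fun (1 / Poly_Mapping.lookup f (lm le f)) (- ?R)"
    by (auto simp: fun_eq_iff field_simps eq_neg_iff_add_eq_0)
  also have "\<dots> \<in> fun_vs.span (?e ` (HH n S - {T}))"
  proof (intro fun_vs.span_scale fun_vs.span_neg fun_vs.span_sum)
    fix m assume m: "m \<in> Poly_Mapping.keys f - {lm le f}"
    have "\<not> T \<subseteq> Poly_Mapping.keys m"
    proof
      assume "T \<subseteq> Poly_Mapping.keys m"
      then have "mon_dvd (lm le f) m" using T(2) T_fin by (simp add: mon_dvd_mon_of_set_keys)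
      with m show False using lm_dvd_key_imp_eq[OF to keys_f f(2)] by blast
    qed
    then have sub: "{T' \<in> HH n S. T' \<subseteq> Poly_Mapping.keys m} \<subseteq> HH n S - {T}" by blast
    have "Poly_Mapping.keys m \<subseteq> {1..n}" using m keys_f by (auto simp: monomials_def)
    then have "?e (Poly_Mapping.keys m) \<in> fun_vs.span (?e ` {T' \<in> HH n S. T' \<subseteq> Poly_Mapping.keys m})"
      by (rule mon_values_in_span[OF S hS])
    also have "\<dots> \<subseteq> fun_vs.span (?e ` (HH n S - {T}))"
      using sub by (intro fun_vs.span_mono image_mono)
    finally show "?e (Poly_Mapping.keys m) \<in> fun_vs.span (?e ` (HH n S - {T}))" .
  qed
  also have "\<dots> \<subseteq> fun_vs.span (?e ` HH n S - {?e T})"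
    using inj T(1) by (intro fun_vs.span_mono) (auto simp: inj_on_eq_iff)
  finally have "fun_vs.dependent (?e ` HH n S)" unfolding fun_vs.dependent_def using T(1) by blast
  with ind show False by blast
qed

lemma independent_imp_groebner_basis:
  assumes to: "term_order n le" and S: "S \<subseteq> Pow {1..n}" and hS: "\<forall>A\<in>S. h A \<subseteq> A"
    and inj: "inj_on (mon_values n S h :: nat set \<Rightarrow> nat set \<Rightarrow> 'a::field) (HH n S)"
    and ind: "fun_vs.independent (mon_values n S h ` HH n S :: (nat set \<Rightarrow> 'a) set)"
  shows "groebner_basis le (GG n S h :: 'a mpoly set) (gen_ideal n (GG n S h))"
proof -
  have fin: "finite (GG n S h :: 'a mpoly set)" using finite_subset[OF S] by (intro finite_GG) simp
  have "\<exists>g\<in>(GG n S h :: 'a mpoly set). g \<noteq> 0 \<and> mon_dvd (lm le g) (lm le f)"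
    if "f \<in> gen_ideal n (GG n S h)" "f \<noteq> 0" for f :: "'a mpoly"
  proof (rule GG_lm_dvd_nonstandard[OF to S hS])
    have "Poly_Mapping.keys f \<subseteq> monomials n" by (rule keys_gen_ideal_GG[OF S hS that(1)])
    then show "lm le f \<in> monomials n" using lm_in_keys_and_max(1)[OF to _ that(2)] by blast
  qed (rule independent_imp_lm_nonstandard[OF to S hS inj ind that])
  with fin show ?thesis unfolding groebner_basis_def using gen_ideal_base by blast
qed

lemma term_order_poly_mapping_le: "term_order n ((\<le>) :: mon \<Rightarrow> mon \<Rightarrow> bool)"
proof -
  have "(0::mon) \<le> a" for a
  proof (cases "a = 0")
    case False
    then obtain k where k: "Poly_Mapping.lookup a k \<noteq> 0" by (metis poly_mapping_eqI lookup_zero)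
    define k0 where "k0 = (LEAST k. Poly_Mapping.lookup a k \<noteq> 0)"
    have "Poly_Mapping.lookup a k0 \<noteq> 0" using k unfolding k0_def by (rule LeastI)
    moreover have "\<forall>k'<k0. Poly_Mapping.lookup a k' = 0" unfolding k0_def using not_less_Least by blast
    ultimately have "less_fun (\<lambda>_. 0::nat) (Poly_Mapping.lookup a)" unfolding less_fun_def by auto
    then show ?thesis by transfer simp
  qed simp
  then show ?thesis unfolding term_order_def by (auto simp: add_right_mono)
qed

theorem theorem22:
  fixes n :: nat and S :: "nat set set" and h :: "nat set \<Rightarrow> nat set"
  assumes "S \<subseteq> Pow {1..n}" and "sperner S"
    and "\<forall>A\<in>S. h A \<subseteq> A"
  shows "(\<exists>le. term_order n le \<and>
            groebner_basis le (GG n S h :: ('a::field) mpoly set) (gen_ideal n (GG n S h)))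
         \<longleftrightarrow> card (HH n S) = card (FF n S h)"
proof -
  have "(\<exists>le. term_order n le \<and> groebner_basis le (GG n S h :: 'a mpoly set) (gen_ideal n (GG n S h))) \<longleftrightarrow>
      inj_on (mon_values n S h :: nat set \<Rightarrow> nat set \<Rightarrow> 'a) (HH n S) \<and>
      fun_vs.independent (mon_values n S h ` HH n S :: (nat set \<Rightarrow> 'a) set)"
    using groebner_basis_imp_independent[OF _ assms(1,3)] independent_imp_groebner_basis[OF _ assms(1,3)]
      term_order_poly_mapping_le by blast
  also have "\<dots> \<longleftrightarrow> card (HH n S) = card (FF n S h)"
    by (rule independent_mon_values_iff_card_eq[OF assms(1,3)])
  finally show ?thesis .
qed

end
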